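(* Let $G$ be a finite group. Then every character in $\mathrm{Irr}(G\mid U(G))$ is fully ramified with respect to $Z(G)$, and $U(G)$ is the largest subgroup of $G$ with this property: if $H\le G$ is any subgroup such that every character in $\mathrm{Irr}(G\mid H)$ is fully ramified with respect to $Z(G)$, then $H\le U(G)$.
   Context: All groups are finite. For a subgroup $H\le G$, $\mathrm{Irr}(G\mid H)$ is the set of $\chi\in\mathrm{Irr}(G)$ with $H\not\le\ker(\chi)$. A character $\chi\in\mathrm{Irr}(G)$ is fully ramified with respect to $Z(G)$ if $\chi_{Z(G)}=\chi(1)\lambda$ for some $\lambda\in\mathrm{Irr}(Z(G))$ and $\chi(1)^2=|G:Z(G)|$ (equivalently, $\chi$ vanishes on $G\setminus Z(G)$). For a normal subgroup $H$ of $G$, let $V(G\mid H)$ be the subgroup generated by all $g\in G$ such that $\chi(g)\neq 0$ for some $\chi\in\mathrm{Irr}(G\mid H)$ (with $V(G\mid 1)=1$). For a normal subgroup $N$ of $G$, let $U(G\mid N)$ be the product of all normal subgroups $H$ of $G$ with $V(G\mid H)\le N$. Define $U(G)=U(G\mid Z(G))$. *)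

theory Defs
  imports "HOL-Algebra.Algebra" "Jordan_Normal_Form.Matrix"
begin

definition group_center :: "('a, 'b) monoid_scheme \<Rightarrow> 'a set" where
  "group_center G = {z \<in> carrier G. \<forall>g \<in> carrier G. z \<otimes>\<^bsub>G\<^esub> g = g \<otimes>\<^bsub>G\<^esub> z}"

definition is_rep :: "('a, 'b) monoid_scheme \<Rightarrow> nat \<Rightarrow> ('a \<Rightarrow> complex mat) \<Rightarrow> bool" where
  "is_rep G n \<rho> \<longleftrightarrow>
     (\<forall>g \<in> carrier G. \<rho> g \<in> carrier_mat n n) \<and>
     \<rho> \<one>\<^bsub>G\<^esub> = 1\<^sub>m n \<and>
     (\<forall>g \<in> carrier G. \<forall>h \<in> carrier G. \<rho> (g \<otimes>\<^bsub>G\<^esub> h) = \<rho> g * \<rho> h)"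

definition invariant_subspace :: "('a, 'b) monoid_scheme \<Rightarrow> nat \<Rightarrow> ('a \<Rightarrow> complex mat) \<Rightarrow> complex vec set \<Rightarrow> bool" where
  "invariant_subspace G n \<rho> W \<longleftrightarrow>
     W \<subseteq> carrier_vec n \<and> 0\<^sub>v n \<in> W \<and>
     (\<forall>v \<in> W. \<forall>w \<in> W. v + w \<in> W) \<and>
     (\<forall>c. \<forall>v \<in> W. c \<cdot>\<^sub>v v \<in> W) \<and>
     (\<forall>g \<in> carrier G. \<forall>v \<in> W. \<rho> g *\<^sub>v v \<in> W)"

definition irreducible_rep :: "('a, 'b) monoid_scheme \<Rightarrow> nat \<Rightarrow> ('a \<Rightarrow> complex mat) \<Rightarrow> bool" where
  "irreducible_rep G n \<rho> \<longleftrightarrow> is_rep G n \<rho> \<and> n > 0 \<and>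
     (\<forall>W. invariant_subspace G n \<rho> W \<longrightarrow> W = {0\<^sub>v n} \<or> W = carrier_vec n)"

definition mat_trace :: "complex mat \<Rightarrow> complex" where
  "mat_trace A = (\<Sum>i<dim_row A. A $$ (i, i))"

definition Irr :: "('a, 'b) monoid_scheme \<Rightarrow> ('a \<Rightarrow> complex) set" where
  "Irr G = {\<chi>. \<exists>n \<rho>. irreducible_rep G n \<rho> \<and>
                 \<chi> = (\<lambda>g. if g \<in> carrier G then mat_trace (\<rho> g) else 0)}"

definition char_kernel :: "('a, 'b) monoid_scheme \<Rightarrow> ('a \<Rightarrow> complex) \<Rightarrow> 'a set" where
  "char_kernel G \<chi> = {g \<in> carrier G. \<chi> g = \<chi> \<one>\<^bsub>G\<^esub>}"

definition Irr_over :: "('a, 'b) monoid_scheme \<Rightarrow> 'a set \<Rightarrow> ('a \<Rightarrow> complex) set" where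
  "Irr_over G H = {\<chi> \<in> Irr G. \<not> H \<subseteq> char_kernel G \<chi>}"

definition fully_ramified :: "('a, 'b) monoid_scheme \<Rightarrow> ('a \<Rightarrow> complex) \<Rightarrow> bool" where
  "fully_ramified G \<chi> \<longleftrightarrow>
     (\<exists>lam \<in> Irr (G\<lparr>carrier := group_center G\<rparr>).
        \<forall>z \<in> group_center G. \<chi> z = \<chi> \<one>\<^bsub>G\<^esub> * lam z) \<and>
     (\<chi> \<one>\<^bsub>G\<^esub>)\<^sup>2 = of_nat (card (carrier G) div card (group_center G))"

definition V_sub :: "('a, 'b) monoid_scheme \<Rightarrow> 'a set \<Rightarrow> 'a set" where
  "V_sub G H = generate G {g \<in> carrier G. \<exists>\<chi> \<in> Irr_over G H. \<chi> g \<noteq> 0}"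

definition U_sub :: "('a, 'b) monoid_scheme \<Rightarrow> 'a set \<Rightarrow> 'a set" where
  "U_sub G N = generate G (\<Union>{H. H \<lhd> G \<and> V_sub G H \<subseteq> N})"

definition U_grp :: "('a, 'b) monoid_scheme \<Rightarrow> 'a set" where
  "U_grp G = U_sub G (group_center G)"

end

theory Submission
  imports Defs "Jordan_Normal_Form.Schur_Decomposition" "Jordan_Normal_Form.Determinant"
begin

text \<open>
  Central elements act by scalars in an irreducible representation \<open>\<rho>\<close> of degree \<open>n\<close>, so the
  first orthogonality relation \<open>\<Sum>\<^sub>g \<bar>\<chi> g\<bar>\<^sup>2 = |G|\<close> reads
  \<open>|Z| n\<^sup>2 + \<Sum>\<^sub>g\<^sub>\<notin>\<^sub>Z \<bar>\<chi> g\<bar>\<^sup>2 = |G|\<close>. Hence \<open>\<chi>\<close> is fully ramified over \<open>Z = Z(G)\<close> iff it vanishes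
  off \<open>Z\<close>, and all of \<open>Irr(G|H)\<close> is fully ramified iff \<open>V(G|H) \<subseteq> Z\<close>.

  Kernels of irreducible characters are normal subgroups: \<open>\<chi> g = \<chi> 1\<close> forces \<open>\<rho> g = 1\<close>, as the
  eigenvalues of \<open>\<rho> g\<close> are roots of unity. So a character lying over the product \<open>U(G|N)\<close> lies
  over one of its factors, whence \<open>V(G|U(G|N)) \<subseteq> N\<close>. Conversely, for any subgroup \<open>H\<close> the
  intersection \<open>K\<close> of the kernels containing \<open>H\<close> is normal with \<open>Irr(G|K) = Irr(G|H)\<close>, so
  \<open>V(G|H) \<subseteq> N\<close> gives \<open>H \<subseteq> K \<subseteq> U(G|N)\<close>.
\<close>

section \<open>Triangularization and matrices of finite order\<close>

lemma index_mult_mat_sum: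
  assumes "A \<in> carrier_mat n m" "B \<in> carrier_mat m p" "i < n" "j < p"
  shows "(A * B) $$ (i,j) = (\<Sum>k<m. A $$ (i,k) * B $$ (k,j))"
  using assms by (auto simp: scalar_prod_def lessThan_atLeast0 intro!: sum.cong)

lemma mat_trace_one [simp]: "mat_trace (1\<^sub>m n) = of_nat n"
  by (simp add: mat_trace_def)

lemma mat_trace_smult_one [simp]: "mat_trace (c \<cdot>\<^sub>m 1\<^sub>m n) = of_nat n * c"
  by (simp add: mat_trace_def)

lemma mat_trace_mult_comm:
  assumes "A \<in> carrier_mat n m" "B \<in> carrier_mat m n"
  shows "mat_trace (A * B) = mat_trace (B * A)"
proof -
  have "mat_trace (A * B) = (\<Sum>i<n. \<Sum>k<m. A $$ (i,k) * B $$ (k,i))"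
    using assms by (simp add: mat_trace_def index_mult_mat_sum del: index_mult_mat(1))
  also have "\<dots> = (\<Sum>k<m. \<Sum>i<n. B $$ (k,i) * A $$ (i,k))"
    by (subst sum.swap) (simp add: mult.commute)
  also have "\<dots> = mat_trace (B * A)"
    using assms by (simp add: mat_trace_def index_mult_mat_sum del: index_mult_mat(1))
  finally show ?thesis .
qed

lemma mat_trace_similar:
  assumes "similar_mat_wit A B P Q"
  shows "mat_trace A = mat_trace B"
proof -
  obtain n where "A \<in> carrier_mat n n" using assms unfolding similar_mat_wit_def Let_def by auto
  note wit = similar_mat_witD2[OF this assms]
  have "mat_trace A = mat_trace (P * (B * Q))"
    using wit by (simp add: assoc_mult_mat[of P n n B n Q n])
  also have "\<dots> = mat_trace (B * Q * P)"
    using wit by (intro mat_trace_mult_comm[of _ n n]) auto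
  also have "\<dots> = mat_trace B"
    using wit by (simp add: assoc_mult_mat[of B n n Q n P n])
  finally show ?thesis .
qed

lemma upper_triangular_mult:
  fixes A B :: "'a :: comm_ring_1 mat"
  assumes A: "A \<in> carrier_mat n n" "upper_triangular A"
    and B: "B \<in> carrier_mat n n" "upper_triangular B"
  shows "upper_triangular (A * B)"
    and "i < n \<Longrightarrow> (A * B) $$ (i,i) = A $$ (i,i) * B $$ (i,i)"
proof -
  have zero: "A $$ (i,k) * B $$ (k,j) = 0" if "j < i" "i < n" "k < n" for i j k
    using that A B by (cases "k < i") (auto simp: upper_triangular_def)
  show "upper_triangular (A * B)"
    using A B by (auto simp: upper_triangular_def index_mult_mat_sum zero simp del: index_mult_mat(1)
        intro!: sum.neutral)
  assume i: "i < n"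
  have "A $$ (i,k) * B $$ (k,i) = 0" if "k < n" "k \<noteq> i" for k
    using that A B i by (cases "k < i") (auto simp: upper_triangular_def)
  then have "(\<Sum>k<n. A $$ (i,k) * B $$ (k,i)) = A $$ (i,i) * B $$ (i,i)"
    using i by (subst sum.remove[of _ i]) (auto intro!: sum.neutral)
  then show "(A * B) $$ (i,i) = A $$ (i,i) * B $$ (i,i)"
    using A B i by (simp add: index_mult_mat_sum del: index_mult_mat(1))
qed

lemma upper_triangular_pow:
  fixes B :: "'a :: comm_ring_1 mat"
  assumes "B \<in> carrier_mat n n" "upper_triangular B"
  shows "upper_triangular (B ^\<^sub>m k)"
    and "i < n \<Longrightarrow> (B ^\<^sub>m k) $$ (i,i) = (B $$ (i,i)) ^ k"
proof -
  have "upper_triangular (B ^\<^sub>m k) \<and> (\<forall>i<n. (B ^\<^sub>m k) $$ (i,i) = (B $$ (i,i)) ^ k)"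
  proof (induction k)
    case 0
    then show ?case using assms(1) by simp
  next
    case (Suc k)
    then show ?case
      using upper_triangular_mult[OF pow_carrier_mat[OF assms(1)] _ assms] by simp
  qed
  then show "upper_triangular (B ^\<^sub>m k)" and "i < n \<Longrightarrow> (B ^\<^sub>m k) $$ (i,i) = (B $$ (i,i)) ^ k"
    by auto
qed

text \<open>Matrices carry their dimensions and form no additive monoid, so a family of \<open>n \<times> n\<close>
  matrices is summed entrywise.\<close>

definition mat_sum :: "nat \<Rightarrow> ('i \<Rightarrow> 'a :: comm_semiring_0 mat) \<Rightarrow> 'i set \<Rightarrow> 'a mat" where
  "mat_sum n F S = mat n n (\<lambda>(k,l). \<Sum>g\<in>S. F g $$ (k,l))"

lemma mat_sum_dim [simp]: "dim_row (mat_sum n F S) = n" "dim_col (mat_sum n F S) = n"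
  by (simp_all add: mat_sum_def)

lemma mat_sum_carrier [simp]: "mat_sum n F S \<in> carrier_mat n n"
  by (simp add: mat_sum_def)

lemma mat_sum_cong: "(\<And>g. g \<in> S \<Longrightarrow> F g = F' g) \<Longrightarrow> mat_sum n F S = mat_sum n F' S"
  by (simp add: mat_sum_def cong: sum.cong)

lemma mat_sum_mult_right:
  assumes F: "\<forall>g\<in>S. F g \<in> carrier_mat n n" and C: "C \<in> carrier_mat n n"
  shows "mat_sum n F S * C = mat_sum n (\<lambda>g. F g * C) S"
proof (rule eq_matI)
  fix k l assume "k < dim_row (mat_sum n (\<lambda>g. F g * C) S)" "l < dim_col (mat_sum n (\<lambda>g. F g * C) S)"
  then have kl: "k < n" "l < n"
    by simp_all
  have "(mat_sum n F S * C) $$ (k,l) = (\<Sum>p<n. mat_sum n F S $$ (k,p) * C $$ (p,l))"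
    by (rule index_mult_mat_sum[OF mat_sum_carrier C kl])
  also have "\<dots> = (\<Sum>p<n. \<Sum>g\<in>S. F g $$ (k,p) * C $$ (p,l))"
    using kl by (simp add: mat_sum_def sum_distrib_right)
  also have "\<dots> = (\<Sum>g\<in>S. \<Sum>p<n. F g $$ (k,p) * C $$ (p,l))"
    by (rule sum.swap)
  also have "\<dots> = (\<Sum>g\<in>S. (F g * C) $$ (k,l))"
    using F by (intro sum.cong refl index_mult_mat_sum[OF _ C kl, symmetric]) simp
  also have "\<dots> = mat_sum n (\<lambda>g. F g * C) S $$ (k,l)"
    using kl by (simp add: mat_sum_def)
  finally show "(mat_sum n F S * C) $$ (k,l) = mat_sum n (\<lambda>g. F g * C) S $$ (k,l)" .
qed (use C in simp_all)

lemma mat_sum_mult_left: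
  assumes F: "\<forall>g\<in>S. F g \<in> carrier_mat n n" and C: "C \<in> carrier_mat n n"
  shows "C * mat_sum n F S = mat_sum n (\<lambda>g. C * F g) S"
proof (rule eq_matI)
  fix k l assume "k < dim_row (mat_sum n (\<lambda>g. C * F g) S)" "l < dim_col (mat_sum n (\<lambda>g. C * F g) S)"
  then have kl: "k < n" "l < n"
    by simp_all
  have "(C * mat_sum n F S) $$ (k,l) = (\<Sum>p<n. C $$ (k,p) * mat_sum n F S $$ (p,l))"
    by (rule index_mult_mat_sum[OF C mat_sum_carrier kl])
  also have "\<dots> = (\<Sum>p<n. \<Sum>g\<in>S. C $$ (k,p) * F g $$ (p,l))"
    using kl by (simp add: mat_sum_def sum_distrib_left)
  also have "\<dots> = (\<Sum>g\<in>S. \<Sum>p<n. C $$ (k,p) * F g $$ (p,l))"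
    by (rule sum.swap)
  also have "\<dots> = (\<Sum>g\<in>S. (C * F g) $$ (k,l))"
    using F by (intro sum.cong refl index_mult_mat_sum[OF C _ kl, symmetric]) simp
  also have "\<dots> = mat_sum n (\<lambda>g. C * F g) S $$ (k,l)"
    using kl by (simp add: mat_sum_def)
  finally show "(C * mat_sum n F S) $$ (k,l) = mat_sum n (\<lambda>g. C * F g) S $$ (k,l)" .
qed (use C in simp_all)

lemma mat_sum_reindex:
  assumes "bij_betw h T S"
  shows "mat_sum n F S = mat_sum n (\<lambda>g. F (h g)) T"
proof -
  have "(\<Sum>g\<in>T. F (h g) $$ (i,j)) = (\<Sum>g\<in>S. F g $$ (i,j))" for i j
    by (rule sum.reindex_bij_betw[OF assms])
  then show ?thesis
    by (simp add: mat_sum_def)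
qed

lemma mat_trace_mat_sum:
  assumes "\<forall>g\<in>S. F g \<in> carrier_mat n n"
  shows "mat_trace (mat_sum n F S) = (\<Sum>g\<in>S. mat_trace (F g))"
proof -
  have "mat_trace (mat_sum n F S) = (\<Sum>i<n. \<Sum>g\<in>S. F g $$ (i,i))"
    by (simp add: mat_trace_def mat_sum_def)
  also have "\<dots> = (\<Sum>g\<in>S. \<Sum>i<n. F g $$ (i,i))"
    by (rule sum.swap)
  also have "\<dots> = (\<Sum>g\<in>S. mat_trace (F g))"
    using assms by (auto simp: mat_trace_def intro!: sum.cong)
  finally show ?thesis .
qed

lemma norm_root_unity:
  fixes d :: complex
  assumes "d ^ m = 1" "m > 0"
  shows "norm d = 1"
  using power_eq_1_iff[OF assms(1)] assms(2) by simp

lemma root_unity_pow_pred_eq_cnj: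
  fixes d :: complex
  assumes "d ^ m = 1" "m > 0"
  shows "d ^ (m - 1) = cnj d"
proof -
  have "d * cnj d = 1"
    using norm_root_unity[OF assms] complex_norm_square[of d] by simp
  moreover have "d * d ^ (m - 1) = 1"
    using assms by (metis Suc_diff_1 power_Suc)
  ultimately show ?thesis
    by (metis mult.assoc mult.commute mult_1_left)
qed

lemma sum_unit_disc_eq_card_imp_one:
  fixes z :: "'i \<Rightarrow> complex"
  assumes "finite I" "\<forall>i\<in>I. norm (z i) \<le> 1" "sum z I = of_nat (card I)"
  shows "\<forall>i\<in>I. z i = 1"
proof -
  have Re_le: "Re (z i) \<le> 1" if "i \<in> I" for i
    using assms(2) that complex_Re_le_cmod order_trans by blast
  have "(\<Sum>i\<in>I. 1 - Re (z i)) = 0"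
    using arg_cong[OF assms(3), of Re] by (simp add: sum_subtractf)
  then have Re1: "Re (z i) = 1" if "i \<in> I" for i
    using sum_nonneg_eq_0_iff[OF assms(1), of "\<lambda>i. 1 - Re (z i)"] Re_le that by auto
  show ?thesis
  proof
    fix i assume i: "i \<in> I"
    have "(norm (z i))\<^sup>2 \<le> 1"
      using assms(2) i by (simp add: power_le_one)
    then have "(Im (z i))\<^sup>2 \<le> 0"
      using Re1[OF i] by (simp add: cmod_power2)
    then show "z i = 1" using Re1[OF i] by (simp add: complex_eq_iff)
  qed
qed

lemma finite_order_mat_triangularize:
  fixes A :: "complex mat"
  assumes A: "A \<in> carrier_mat n n" and Am: "A ^\<^sub>m m = 1\<^sub>m n"
  obtains B P Q where "similar_mat_wit A B P Q" "B \<in> carrier_mat n n" "upper_triangular B"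
    "B ^\<^sub>m m = 1\<^sub>m n" "\<forall>i<n. (B $$ (i,i)) ^ m = 1"
proof -
  obtain es where es: "char_poly A = (\<Prod>a \<leftarrow> es. [:- a, 1:])"
    using char_poly_factorized[OF A] by blast
  define B where "B = schur_upper_triangular A es"
  note B = schur_upper_triangular[OF A es, folded B_def]
  obtain P Q where wit: "similar_mat_wit A B P Q"
    using B(3) unfolding similar_mat_def by blast
  note wit' = similar_mat_witD2[OF A wit]
  have "B ^\<^sub>m m = Q * A ^\<^sub>m m * P"
    by (rule similar_mat_wit_pow_id[OF similar_mat_wit_sym[OF wit]])
  also have "\<dots> = 1\<^sub>m n"
    using wit' Am by simp
  finally have Bm: "B ^\<^sub>m m = 1\<^sub>m n" .
  then have "\<forall>i<n. (B $$ (i,i)) ^ m = 1"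
    using upper_triangular_pow(2)[OF B(1,2), of _ m] by simp
  with wit B Bm show ?thesis using that by blast
qed

lemma mat_trace_pow_triangularized:
  assumes "similar_mat_wit A B P Q" "B \<in> carrier_mat n n" "upper_triangular B"
  shows "mat_trace (A ^\<^sub>m k) = (\<Sum>i<n. (B $$ (i,i)) ^ k)"
proof -
  have "mat_trace (A ^\<^sub>m k) = mat_trace (B ^\<^sub>m k)"
    by (rule mat_trace_similar[OF similar_mat_wit_pow[OF assms(1)]])
  also have "\<dots> = (\<Sum>i<n. (B $$ (i,i)) ^ k)"
    using upper_triangular_pow(2)[OF assms(2,3)] assms(2) by (simp add: mat_trace_def)
  finally show ?thesis .
qed

lemma mat_trace_pow_pred_finite_order:
  fixes A :: "complex mat"
  assumes A: "A \<in> carrier_mat n n" and m: "m > 0" and Am: "A ^\<^sub>m m = 1\<^sub>m n"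
  shows "mat_trace (A ^\<^sub>m (m - 1)) = cnj (mat_trace A)"
proof -
  obtain B P Q where wit: "similar_mat_wit A B P Q" and B: "B \<in> carrier_mat n n" "upper_triangular B"
    and "B ^\<^sub>m m = 1\<^sub>m n" and diag: "\<forall>i<n. (B $$ (i,i)) ^ m = 1"
    by (rule finite_order_mat_triangularize[OF A Am])
  have "mat_trace (A ^\<^sub>m (m - 1)) = (\<Sum>i<n. (B $$ (i,i)) ^ (m - 1))"
    by (rule mat_trace_pow_triangularized[OF wit B])
  also have "\<dots> = (\<Sum>i<n. cnj (B $$ (i,i)))"
    using diag m root_unity_pow_pred_eq_cnj by (intro sum.cong refl) auto
  also have "\<dots> = cnj (mat_trace (A ^\<^sub>m 1))"
    using mat_trace_pow_triangularized[OF wit B, of 1] A by simp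
  finally show ?thesis
    using A by simp
qed

lemma sum_lessThan_shift_periodic:
  assumes "f m = f 0"
  shows "(\<Sum>k<m. f (Suc k)) = (\<Sum>k<m. f k :: 'a :: cancel_comm_monoid_add)"
  using sum.lessThan_Suc_shift[of f m] sum.lessThan_Suc[of f m] assms by (simp add: add.commute)

lemma mat_sum_lessThan_shift_periodic:
  fixes F :: "nat \<Rightarrow> 'a :: comm_semiring_0_cancel mat"
  assumes "F m = F 0"
  shows "mat_sum n (\<lambda>k. F (Suc k)) {..<m} = mat_sum n F {..<m}"
  unfolding mat_sum_def
  by (rule cong_mat) (simp_all add: sum_lessThan_shift_periodic[where f = "\<lambda>k. F k $$ _"] assms)

lemma unipotent_upper_triangular_finite_order_eq_one:
  fixes B :: "'a :: field_char_0 mat"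
  assumes B: "B \<in> carrier_mat n n" "upper_triangular B" and diag: "\<forall>i<n. B $$ (i,i) = 1"
    and m: "m > 0" and Bm: "B ^\<^sub>m m = 1\<^sub>m n"
  shows "B = 1\<^sub>m n"
proof -
  define M where "M = mat_sum n (\<lambda>k. B ^\<^sub>m k) {..<m}"
  have M: "M \<in> carrier_mat n n"
    by (simp add: M_def)
  have "upper_triangular M"
  proof
    fix i j assume "j < i" "i < dim_row M"
    then show "M $$ (i,j) = 0"
      using B(1) by (auto simp: M_def mat_sum_def intro!: sum.neutral upper_triangularD[OF upper_triangular_pow(1)[OF B]])
  qed
  then have "det M = (\<Prod>i<n. M $$ (i,i))"
    using M by (simp add: det_upper_triangular prod_list_diag_prod atLeast0LessThan)
  also have "\<dots> = (\<Prod>i<n. of_nat m)"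
    using upper_triangular_pow(2)[OF B] diag by (intro prod.cong) (simp_all add: M_def mat_sum_def)
  finally have "det M \<noteq> 0"
    using m by simp
  then obtain N where N: "N \<in> carrier_mat n n" and NM: "N * M = 1\<^sub>m n"
    using det_non_zero_imp_unit[OF M, of "()"] unfolding Units_def ring_mat_def by auto
  have "M * B = mat_sum n (\<lambda>k. B ^\<^sub>m Suc k) {..<m}"
    using B(1) by (simp add: M_def mat_sum_mult_right)
  also have "\<dots> = M"
    unfolding M_def by (rule mat_sum_lessThan_shift_periodic) (use Bm B(1) in simp)
  finally have MB: "M * B = M" .
  have "B = (N * M) * B"
    using B NM by simp
  also have "\<dots> = N * (M * B)"
    by (rule assoc_mult_mat[OF N M B(1)])
  also have "\<dots> = 1\<^sub>m n"
    by (simp add: MB NM)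
  finally show ?thesis .
qed

lemma finite_order_mat_eq_one_iff_trace:
  fixes A :: "complex mat"
  assumes A: "A \<in> carrier_mat n n" and m: "m > 0" and Am: "A ^\<^sub>m m = 1\<^sub>m n"
  shows "A = 1\<^sub>m n \<longleftrightarrow> mat_trace A = of_nat n"
proof
  assume tr: "mat_trace A = of_nat n"
  obtain B P Q where wit: "similar_mat_wit A B P Q" and B: "B \<in> carrier_mat n n" "upper_triangular B"
    and Bm: "B ^\<^sub>m m = 1\<^sub>m n" and diag: "\<forall>i<n. (B $$ (i,i)) ^ m = 1"
    by (rule finite_order_mat_triangularize[OF A Am])
  have "\<forall>i\<in>{..<n}. norm (B $$ (i,i)) \<le> 1"
    using diag m by (simp add: norm_root_unity[of _ m])
  moreover have "(\<Sum>i<n. B $$ (i,i)) = of_nat (card {..<n})"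
    using mat_trace_pow_triangularized[OF wit B, of 1] tr A by simp
  ultimately have "\<forall>i\<in>{..<n}. B $$ (i,i) = 1"
    by (rule sum_unit_disc_eq_card_imp_one[OF finite_lessThan])
  then have "B = 1\<^sub>m n"
    using unipotent_upper_triangular_finite_order_eq_one[OF B _ m Bm] by simp
  then show "A = 1\<^sub>m n"
    using similar_mat_witD2[OF A wit] by simp
qed simp

section \<open>Representations and Schur's lemma\<close>

lemma complex_mat_has_eigenvector:
  fixes A :: "complex mat"
  assumes A: "A \<in> carrier_mat n n" and n: "n > 0"
  obtains e v where "v \<in> carrier_vec n" "v \<noteq> 0\<^sub>v n" "A *\<^sub>v v = e \<cdot>\<^sub>v v"
proof -
  obtain es where es: "char_poly A = (\<Prod>a \<leftarrow> es. [:- a, 1:])" and "length es = n"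
    using char_poly_factorized[OF A] by blast
  then obtain e es' where "es = e # es'"
    using n by (cases es) auto
  then have "eigenvalue A e"
    using eigenvalue_root_char_poly[OF A] es by simp
  then show ?thesis
    using that A unfolding eigenvalue_def eigenvector_def by auto
qed

lemma is_rep_carrier: "is_rep G n \<rho> \<Longrightarrow> g \<in> carrier G \<Longrightarrow> \<rho> g \<in> carrier_mat n n"
  by (simp add: is_rep_def)

lemma is_rep_one: "is_rep G n \<rho> \<Longrightarrow> \<rho> \<one>\<^bsub>G\<^esub> = 1\<^sub>m n"
  by (simp add: is_rep_def)

lemma is_rep_mult:
  "is_rep G n \<rho> \<Longrightarrow> g \<in> carrier G \<Longrightarrow> h \<in> carrier G \<Longrightarrow> \<rho> (g \<otimes>\<^bsub>G\<^esub> h) = \<rho> g * \<rho> h"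
  by (simp add: is_rep_def)

lemma irreducible_rep_is_rep: "irreducible_rep G n \<rho> \<Longrightarrow> is_rep G n \<rho>"
  by (simp add: irreducible_rep_def)

lemma irreducible_rep_degree_pos: "irreducible_rep G n \<rho> \<Longrightarrow> n > 0"
  by (simp add: irreducible_rep_def)

lemma eigenspace_invariant_subspace:
  assumes rep: "is_rep G n \<rho>" and A: "A \<in> carrier_mat n n"
    and comm: "\<forall>g\<in>carrier G. A * \<rho> g = \<rho> g * A"
  shows "invariant_subspace G n \<rho> {w \<in> carrier_vec n. A *\<^sub>v w = e \<cdot>\<^sub>v w}"
  unfolding invariant_subspace_def
proof (intro conjI ballI allI)
  fix x y assume "x \<in> {w \<in> carrier_vec n. A *\<^sub>v w = e \<cdot>\<^sub>v w}" "y \<in> {w \<in> carrier_vec n. A *\<^sub>v w = e \<cdot>\<^sub>v w}"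
  then show "x + y \<in> {w \<in> carrier_vec n. A *\<^sub>v w = e \<cdot>\<^sub>v w}"
    by (auto simp: mult_add_distrib_mat_vec[OF A] smult_add_distrib_vec)
next
  fix c x assume "x \<in> {w \<in> carrier_vec n. A *\<^sub>v w = e \<cdot>\<^sub>v w}"
  then show "c \<cdot>\<^sub>v x \<in> {w \<in> carrier_vec n. A *\<^sub>v w = e \<cdot>\<^sub>v w}"
    by (auto simp: mult_mat_vec[OF A] smult_smult_assoc mult.commute)
next
  fix g x assume g: "g \<in> carrier G" and "x \<in> {w \<in> carrier_vec n. A *\<^sub>v w = e \<cdot>\<^sub>v w}"
  then have x: "x \<in> carrier_vec n" and Ax: "A *\<^sub>v x = e \<cdot>\<^sub>v x"
    by auto
  note \<rho>g = is_rep_carrier[OF rep g]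
  have "A *\<^sub>v (\<rho> g *\<^sub>v x) = (\<rho> g * A) *\<^sub>v x"
    using A \<rho>g x comm g by (simp flip: assoc_mult_mat_vec)
  also have "\<dots> = e \<cdot>\<^sub>v (\<rho> g *\<^sub>v x)"
    using A \<rho>g x by (simp add: Ax mult_mat_vec)
  finally show "\<rho> g *\<^sub>v x \<in> {w \<in> carrier_vec n. A *\<^sub>v w = e \<cdot>\<^sub>v w}"
    using \<rho>g x by simp
qed (use A in auto)

lemma eigenspace_eq_carrier_imp_smult_one:
  fixes A :: "'a :: comm_ring_1 mat"
  assumes A: "A \<in> carrier_mat n n" and W: "{w \<in> carrier_vec n. A *\<^sub>v w = e \<cdot>\<^sub>v w} = carrier_vec n"
  shows "A = e \<cdot>\<^sub>m 1\<^sub>m n"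
proof (rule eq_matI)
  fix i j assume "i < dim_row (e \<cdot>\<^sub>m 1\<^sub>m n)" "j < dim_col (e \<cdot>\<^sub>m 1\<^sub>m n)"
  then have i: "i < n" and j: "j < n"
    by auto
  have "A *\<^sub>v unit_vec n j = e \<cdot>\<^sub>v unit_vec n j"
    using W unit_vec_carrier[of n j] by blast
  then have "(A *\<^sub>v unit_vec n j) $ i = (e \<cdot>\<^sub>v unit_vec n j) $ i"
    by simp
  then show "A $$ (i,j) = (e \<cdot>\<^sub>m 1\<^sub>m n) $$ (i,j)"
    using A i j by (simp add: scalar_prod_def unit_vec_def row_def if_distrib cong: if_cong)
qed (use A in auto)

lemma schur_lemma:
  assumes irr: "irreducible_rep G n \<rho>" and A: "A \<in> carrier_mat n n"
    and comm: "\<forall>g\<in>carrier G. A * \<rho> g = \<rho> g * A"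
  obtains c where "A = c \<cdot>\<^sub>m 1\<^sub>m n"
proof -
  obtain e v where v: "v \<in> carrier_vec n" "v \<noteq> 0\<^sub>v n" "A *\<^sub>v v = e \<cdot>\<^sub>v v"
    using complex_mat_has_eigenvector[OF A irreducible_rep_degree_pos[OF irr]] .
  have "invariant_subspace G n \<rho> {w \<in> carrier_vec n. A *\<^sub>v w = e \<cdot>\<^sub>v w}"
    by (rule eigenspace_invariant_subspace[OF irreducible_rep_is_rep[OF irr] A comm])
  then have "{w \<in> carrier_vec n. A *\<^sub>v w = e \<cdot>\<^sub>v w} = carrier_vec n"
    using irr v unfolding irreducible_rep_def by blast
  then show ?thesis
    using eigenspace_eq_carrier_imp_smult_one[OF A] that by blast
qed

context group
begin

lemma is_rep_inv:
  assumes "is_rep G n \<rho>" "g \<in> carrier G"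
  shows "\<rho> (inv g) * \<rho> g = 1\<^sub>m n" and "\<rho> g * \<rho> (inv g) = 1\<^sub>m n"
  using is_rep_mult[OF assms(1), of "inv g" g] is_rep_mult[OF assms(1), of g "inv g"]
    is_rep_one[OF assms(1)] assms(2) by simp_all

lemma is_rep_pow:
  assumes "is_rep G n \<rho>" "g \<in> carrier G"
  shows "\<rho> (g [^] (k::nat)) = \<rho> g ^\<^sub>m k"
proof (induction k)
  case 0
  then show ?case using assms is_rep_carrier[OF assms] by (simp add: is_rep_one)
next
  case (Suc k)
  then show ?case using assms by (simp add: is_rep_mult)
qed

lemma is_rep_finite_order:
  assumes fin: "finite (carrier G)" and rep: "is_rep G n \<rho>" and g: "g \<in> carrier G"
  obtains m where "m > 0" "\<rho> g ^\<^sub>m m = 1\<^sub>m n" "\<rho> (inv g) = \<rho> g ^\<^sub>m (m - 1)"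
proof
  show m: "ord g > 0"
    using ord_ge_1[OF fin g] by simp
  show "\<rho> g ^\<^sub>m ord g = 1\<^sub>m n"
    using is_rep_pow[OF rep g, of "ord g"] g by (simp add: is_rep_one[OF rep])
  have "g [^] (ord g - 1) \<otimes> g = \<one>"
    using m g by (metis Suc_diff_1 nat_pow_Suc pow_ord_eq_1)
  then have "inv g = g [^] (ord g - 1)"
    using g by (simp add: inv_equality)
  then show "\<rho> (inv g) = \<rho> g ^\<^sub>m (ord g - 1)"
    by (simp add: is_rep_pow[OF rep g])
qed

lemma rep_trace_inv:
  assumes "finite (carrier G)" "is_rep G n \<rho>" "g \<in> carrier G"
  shows "mat_trace (\<rho> (inv g)) = cnj (mat_trace (\<rho> g))"
proof -
  obtain m where "m > 0" "\<rho> g ^\<^sub>m m = 1\<^sub>m n" "\<rho> (inv g) = \<rho> g ^\<^sub>m (m - 1)"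
    using is_rep_finite_order[OF assms] .
  then show ?thesis
    using mat_trace_pow_pred_finite_order[OF is_rep_carrier[OF assms(2,3)]] by simp
qed

lemma rep_eq_one_iff_trace:
  assumes "finite (carrier G)" "is_rep G n \<rho>" "g \<in> carrier G"
  shows "\<rho> g = 1\<^sub>m n \<longleftrightarrow> mat_trace (\<rho> g) = of_nat n"
proof -
  obtain m where "m > 0" "\<rho> g ^\<^sub>m m = 1\<^sub>m n"
    using is_rep_finite_order[OF assms] .
  then show ?thesis
    using finite_order_mat_eq_one_iff_trace[OF is_rep_carrier[OF assms(2,3)]] by simp
qed

lemma rep_kernel_normal:
  assumes rep: "is_rep G n \<rho>"
  shows "{g \<in> carrier G. \<rho> g = 1\<^sub>m n} \<lhd> G"
proof -
  let ?K = "{g \<in> carrier G. \<rho> g = 1\<^sub>m n}"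
  have "subgroup ?K G"
  proof (rule subgroupI)
    fix a assume a: "a \<in> ?K"
    then have "\<rho> (inv a) = \<rho> (inv a) * \<rho> a"
      using is_rep_carrier[OF rep, of "inv a"] by simp
    also have "\<dots> = 1\<^sub>m n"
      by (rule is_rep_inv(1)[OF rep]) (use a in simp)
    finally show "inv a \<in> ?K"
      using a by simp
  qed (use is_rep_one[OF rep] is_rep_mult[OF rep] in auto)
  moreover have "x \<otimes> h \<otimes> inv x \<in> ?K" if "x \<in> carrier G" "h \<in> ?K" for x h
  proof -
    have "\<rho> (x \<otimes> h \<otimes> inv x) = \<rho> x * \<rho> h * \<rho> (inv x)"
      using that by (simp add: is_rep_mult[OF rep])
    then show ?thesis
      using that is_rep_carrier[OF rep, of x] is_rep_inv(2)[OF rep, of x] by simp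
  qed
  ultimately show ?thesis
    by (simp add: normal_inv_iff)
qed

end

section \<open>The first orthogonality relation\<close>

lemma index_mult_elementary_mult:
  fixes A B :: "'a :: comm_ring_1 mat"
  assumes A: "A \<in> carrier_mat n n" and B: "B \<in> carrier_mat n n"
    and ab: "a < n" "b < n" and ij: "i < n" "j < n"
  shows "(A * mat n n (\<lambda>(k,l). if k = a \<and> l = b then 1 else 0) * B) $$ (i,j) = A $$ (i,a) * B $$ (b,j)"
proof -
  let ?E = "mat n n (\<lambda>(k,l). if k = a \<and> l = b then 1 else 0) :: 'a mat"
  have AE: "(A * ?E) $$ (i,p) = (if p = b then A $$ (i,a) else 0)" if p: "p < n" for p
  proof -
    have "(A * ?E) $$ (i,p) = (\<Sum>q<n. A $$ (i,q) * ?E $$ (q,p))"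
      by (rule index_mult_mat_sum[OF A _ ij(1) p]) simp
    also have "\<dots> = (\<Sum>q<n. if q = a then (if p = b then A $$ (i,a) else 0) else 0)"
      using p by (intro sum.cong) auto
    finally show ?thesis
      using ab by simp
  qed
  have "(A * ?E * B) $$ (i,j) = (\<Sum>p<n. (A * ?E) $$ (i,p) * B $$ (p,j))"
    by (rule index_mult_mat_sum[OF _ B ij]) (use A in simp)
  also have "\<dots> = (\<Sum>p<n. if p = b then A $$ (i,a) * B $$ (b,j) else 0)"
    by (intro sum.cong) (auto simp: AE)
  finally show ?thesis
    using ab by simp
qed

context group
begin

lemma bij_betw_mult_left: "h \<in> carrier G \<Longrightarrow> bij_betw (\<lambda>g. h \<otimes> g) (carrier G) (carrier G)"
  by (rule bij_betw_byWitness[where f' = "\<lambda>g. inv h \<otimes> g"]) (auto simp: m_assoc[symmetric])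

lemma rep_average_commute:
  assumes rep: "is_rep G n \<rho>" and A: "A \<in> carrier_mat n n" and h: "h \<in> carrier G"
  shows "mat_sum n (\<lambda>g. \<rho> g * A * \<rho> (inv g)) (carrier G) * \<rho> h
           = \<rho> h * mat_sum n (\<lambda>g. \<rho> g * A * \<rho> (inv g)) (carrier G)"
proof -
  note \<rho> = is_rep_carrier[OF rep]
  have conj_carrier: "\<forall>g\<in>carrier G. \<rho> g * A * \<rho> (inv g) \<in> carrier_mat n n"
    using \<rho> A by (blast intro: mult_carrier_mat)
  have "mat_sum n (\<lambda>g. \<rho> g * A * \<rho> (inv g)) (carrier G) * \<rho> h
          = mat_sum n (\<lambda>g. \<rho> g * A * \<rho> (inv g) * \<rho> h) (carrier G)"
    using \<rho> h by (simp add: mat_sum_mult_right conj_carrier)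
  also have "\<dots> = mat_sum n (\<lambda>g. \<rho> g * A * \<rho> (inv g \<otimes> h)) (carrier G)"
  proof (rule mat_sum_cong)
    fix g assume g: "g \<in> carrier G"
    have "\<rho> g * A * \<rho> (inv g) * \<rho> h = \<rho> g * A * (\<rho> (inv g) * \<rho> h)"
      by (rule assoc_mult_mat[OF mult_carrier_mat[OF \<rho>[OF g] A] \<rho>[OF inv_closed[OF g]] \<rho>[OF h]])
    then show "\<rho> g * A * \<rho> (inv g) * \<rho> h = \<rho> g * A * \<rho> (inv g \<otimes> h)"
      using g h by (simp add: is_rep_mult[OF rep])
  qed
  also have "\<dots> = mat_sum n (\<lambda>g. \<rho> (h \<otimes> g) * A * \<rho> (inv (h \<otimes> g) \<otimes> h)) (carrier G)"
    by (rule mat_sum_reindex[OF bij_betw_mult_left[OF h]])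
  also have "\<dots> = mat_sum n (\<lambda>g. \<rho> h * (\<rho> g * A * \<rho> (inv g))) (carrier G)"
  proof (rule mat_sum_cong)
    fix g assume g: "g \<in> carrier G"
    then have "inv (h \<otimes> g) \<otimes> h = inv g"
      using h by (simp add: inv_mult_group m_assoc)
    moreover have "\<rho> h * \<rho> g * A * \<rho> (inv g) = \<rho> h * (\<rho> g * A * \<rho> (inv g))"
      using assoc_mult_mat[OF \<rho>[OF h] \<rho>[OF g] A]
        assoc_mult_mat[OF \<rho>[OF h] mult_carrier_mat[OF \<rho>[OF g] A] \<rho>[OF inv_closed[OF g]]] by simp
    ultimately show "\<rho> (h \<otimes> g) * A * \<rho> (inv (h \<otimes> g) \<otimes> h) = \<rho> h * (\<rho> g * A * \<rho> (inv g))"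
      using g h by (simp add: is_rep_mult[OF rep])
  qed
  also have "\<dots> = \<rho> h * mat_sum n (\<lambda>g. \<rho> g * A * \<rho> (inv g)) (carrier G)"
    using \<rho> h by (simp add: mat_sum_mult_left conj_carrier)
  finally show ?thesis .
qed

lemma mat_trace_rep_conj:
  assumes rep: "is_rep G n \<rho>" and A: "A \<in> carrier_mat n n" and g: "g \<in> carrier G"
  shows "mat_trace (\<rho> g * A * \<rho> (inv g)) = mat_trace A"
proof -
  note \<rho>g = is_rep_carrier[OF rep g] and \<rho>g' = is_rep_carrier[OF rep inv_closed[OF g]]
  have "mat_trace (\<rho> g * A * \<rho> (inv g)) = mat_trace (\<rho> g * (A * \<rho> (inv g)))"
    by (simp add: assoc_mult_mat[OF \<rho>g A \<rho>g'])
  also have "\<dots> = mat_trace (A * \<rho> (inv g) * \<rho> g)"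
    by (rule mat_trace_mult_comm[OF \<rho>g mult_carrier_mat[OF A \<rho>g']])
  also have "\<dots> = mat_trace A"
    using A g by (simp add: assoc_mult_mat[OF A \<rho>g' \<rho>g] is_rep_inv(1)[OF rep])
  finally show ?thesis .
qed

lemma irreducible_rep_average:
  assumes fin: "finite (carrier G)" and irr: "irreducible_rep G n \<rho>" and A: "A \<in> carrier_mat n n"
  shows "mat_sum n (\<lambda>g. \<rho> g * A * \<rho> (inv g)) (carrier G)
           = (of_nat (card (carrier G)) * mat_trace A / of_nat n) \<cdot>\<^sub>m 1\<^sub>m n"
proof -
  note rep = irreducible_rep_is_rep[OF irr] and n = irreducible_rep_degree_pos[OF irr]
  define T where "T = mat_sum n (\<lambda>g. \<rho> g * A * \<rho> (inv g)) (carrier G)"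
  obtain c where Tc: "T = c \<cdot>\<^sub>m 1\<^sub>m n"
    using schur_lemma[OF irr, of T] rep_average_commute[OF rep A] by (auto simp: T_def)
  have "\<forall>g\<in>carrier G. \<rho> g * A * \<rho> (inv g) \<in> carrier_mat n n"
    using is_rep_carrier[OF rep] A by (blast intro: mult_carrier_mat)
  then have "mat_trace T = (\<Sum>g\<in>carrier G. mat_trace (\<rho> g * A * \<rho> (inv g)))"
    by (simp add: T_def mat_trace_mat_sum)
  then have "of_nat n * c = (\<Sum>g\<in>carrier G. mat_trace (\<rho> g * A * \<rho> (inv g)))"
    by (simp add: Tc)
  also have "\<dots> = of_nat (card (carrier G)) * mat_trace A"
    by (simp add: mat_trace_rep_conj[OF rep A])
  finally have "c = of_nat (card (carrier G)) * mat_trace A / of_nat n"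
    using n by (simp add: field_simps)
  then show ?thesis
    using Tc by (simp add: T_def)
qed

lemma rep_diag_entry_orthogonality:
  assumes fin: "finite (carrier G)" and irr: "irreducible_rep G n \<rho>" and ab: "a < n" "b < n"
  shows "(\<Sum>g\<in>carrier G. \<rho> g $$ (a,a) * \<rho> (inv g) $$ (b,b))
           = (if a = b then of_nat (card (carrier G)) / of_nat n else 0)"
proof -
  note \<rho> = is_rep_carrier[OF irreducible_rep_is_rep[OF irr]]
  define E where "E = mat n n (\<lambda>(k,l). if k = a \<and> l = b then 1 else (0::complex))"
  have E: "E \<in> carrier_mat n n"
    by (simp add: E_def)
  have "(\<Sum>g\<in>carrier G. \<rho> g $$ (a,a) * \<rho> (inv g) $$ (b,b))
          = mat_sum n (\<lambda>g. \<rho> g * E * \<rho> (inv g)) (carrier G) $$ (a,b)"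
    unfolding mat_sum_def using ab
    by (simp add: E_def index_mult_elementary_mult[OF \<rho> \<rho>] cong: sum.cong)
  also have "\<dots> = ((of_nat (card (carrier G)) * mat_trace E / of_nat n) \<cdot>\<^sub>m 1\<^sub>m n) $$ (a,b)"
    by (simp only: irreducible_rep_average[OF fin irr E])
  also have "\<dots> = (if a = b then of_nat (card (carrier G)) / of_nat n else 0)"
    using ab by (simp add: mat_trace_def E_def cong: if_cong)
  finally show ?thesis .
qed

theorem character_orthogonality:
  assumes fin: "finite (carrier G)" and irr: "irreducible_rep G n \<rho>"
  shows "(\<Sum>g\<in>carrier G. mat_trace (\<rho> g) * mat_trace (\<rho> (inv g))) = of_nat (card (carrier G))"
proof -
  note \<rho> = is_rep_carrier[OF irreducible_rep_is_rep[OF irr]]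
  have "(\<Sum>g\<in>carrier G. mat_trace (\<rho> g) * mat_trace (\<rho> (inv g)))
      = (\<Sum>g\<in>carrier G. \<Sum>a<n. \<Sum>b<n. \<rho> g $$ (a,a) * \<rho> (inv g) $$ (b,b))"
  proof (rule sum.cong[OF refl])
    fix g assume "g \<in> carrier G"
    then have "\<rho> g \<in> carrier_mat n n" "\<rho> (inv g) \<in> carrier_mat n n"
      using \<rho> by simp_all
    then show "mat_trace (\<rho> g) * mat_trace (\<rho> (inv g))
        = (\<Sum>a<n. \<Sum>b<n. \<rho> g $$ (a,a) * \<rho> (inv g) $$ (b,b))"
      by (simp add: mat_trace_def sum_product)
  qed
  also have "\<dots> = (\<Sum>a<n. \<Sum>b<n. \<Sum>g\<in>carrier G. \<rho> g $$ (a,a) * \<rho> (inv g) $$ (b,b))"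
    by (subst sum.swap) (simp add: sum.swap[of _ "carrier G" "{..<n}"])
  also have "\<dots> = (\<Sum>a<n. \<Sum>b<n. if a = b then of_nat (card (carrier G)) / of_nat n else 0)"
    by (intro sum.cong refl) (simp add: rep_diag_entry_orthogonality[OF fin irr])
  also have "\<dots> = of_nat (card (carrier G))"
    using irreducible_rep_degree_pos[OF irr] by simp
  finally show ?thesis .
qed

end

section \<open>Characters, the centre and full ramification\<close>

definition rep_character :: "('a, 'b) monoid_scheme \<Rightarrow> ('a \<Rightarrow> complex mat) \<Rightarrow> 'a \<Rightarrow> complex" where
  "rep_character G \<rho> = (\<lambda>g. if g \<in> carrier G then mat_trace (\<rho> g) else 0)"

lemma Irr_iff: "\<chi> \<in> Irr G \<longleftrightarrow> (\<exists>n \<rho>. irreducible_rep G n \<rho> \<and> \<chi> = rep_character G \<rho>)"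
  by (simp add: Irr_def rep_character_def)

lemma IrrE:
  assumes "\<chi> \<in> Irr G"
  obtains n \<rho> where "irreducible_rep G n \<rho>" "\<chi> = rep_character G \<rho>"
  using assms by (auto simp: Irr_iff)

lemma rep_character_in_Irr: "irreducible_rep G n \<rho> \<Longrightarrow> rep_character G \<rho> \<in> Irr G"
  by (auto simp: Irr_iff)

lemma is_rep_one_dim_irreducible:
  assumes "is_rep H 1 \<sigma>"
  shows "irreducible_rep H 1 \<sigma>"
  unfolding irreducible_rep_def
proof (intro conjI allI impI)
  fix W assume "invariant_subspace H 1 \<sigma> W"
  then have W: "W \<subseteq> carrier_vec 1" and smult: "\<forall>c. \<forall>v\<in>W. c \<cdot>\<^sub>v v \<in> W"
    by (auto simp: invariant_subspace_def)
  show "W = {0\<^sub>v 1} \<or> W = carrier_vec 1"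
  proof (cases "W = {0\<^sub>v 1}")
    case False
    then obtain w where w: "w \<in> W" "w \<noteq> 0\<^sub>v 1"
      using \<open>invariant_subspace H 1 \<sigma> W\<close> by (auto simp: invariant_subspace_def)
    then have w_carrier: "w \<in> carrier_vec 1"
      using W by auto
    have "w $ 0 \<noteq> 0"
    proof
      assume "w $ 0 = 0"
      then have "w = 0\<^sub>v 1"
        using w_carrier by (intro eq_vecI) auto
      then show False
        using w(2) by simp
    qed
    have "v \<in> W" if "v \<in> carrier_vec 1" for v :: "complex vec"
    proof -
      have "v = (v $ 0 / w $ 0) \<cdot>\<^sub>v w"
        using that w_carrier \<open>w $ 0 \<noteq> 0\<close> by (intro eq_vecI) auto
      then show ?thesis
        using smult w(1) by metis
    qed
    then have "W = carrier_vec 1"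
      using W by blast
    then show ?thesis ..
  qed simp
qed (use assms in simp_all)

context group
begin

lemma char_kernel_rep_character:
  assumes "finite (carrier G)" "is_rep G n \<rho>"
  shows "char_kernel G (rep_character G \<rho>) = {g \<in> carrier G. \<rho> g = 1\<^sub>m n}"
  using rep_eq_one_iff_trace[OF assms] is_rep_one[OF assms(2)]
  by (auto simp: char_kernel_def rep_character_def)

lemma char_kernel_normal:
  assumes "finite (carrier G)" "\<chi> \<in> Irr G"
  shows "char_kernel G \<chi> \<lhd> G"
proof -
  obtain n \<rho> where irr: "irreducible_rep G n \<rho>" and \<chi>: "\<chi> = rep_character G \<rho>"
    using assms(2) by (rule IrrE)
  note rep = irreducible_rep_is_rep[OF irr]
  show ?thesis
    unfolding \<chi> char_kernel_rep_character[OF assms(1) rep] by (rule rep_kernel_normal[OF rep])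
qed

lemma group_center_subgroup: "subgroup (group_center G) G"
proof (rule subgroupI)
  fix a assume a: "a \<in> group_center G"
  have ac: "a \<in> carrier G"
    using a by (simp add: group_center_def)
  have "inv a \<otimes> g = g \<otimes> inv a" if g: "g \<in> carrier G" for g
  proof -
    have ag: "a \<otimes> g = g \<otimes> a"
      using a g by (simp add: group_center_def)
    have "g \<otimes> inv a = inv a \<otimes> (a \<otimes> g) \<otimes> inv a"
      using ac g by (simp add: m_assoc[symmetric])
    also have "\<dots> = inv a \<otimes> g"
      using ac g by (simp add: ag m_assoc)
    finally show ?thesis
      by simp
  qed
  then show "inv a \<in> group_center G"
    using ac by (simp add: group_center_def)
next
  fix a b assume a: "a \<in> group_center G" and b: "b \<in> group_center G"
  then have ac: "a \<in> carrier G" and bc: "b \<in> carrier G"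
    by (simp_all add: group_center_def)
  have "a \<otimes> b \<otimes> g = g \<otimes> (a \<otimes> b)" if g: "g \<in> carrier G" for g
  proof -
    have ag: "a \<otimes> g = g \<otimes> a" and bg: "b \<otimes> g = g \<otimes> b"
      using a b g by (simp_all add: group_center_def)
    have "a \<otimes> b \<otimes> g = a \<otimes> g \<otimes> b"
      using ac bc g by (simp add: m_assoc bg)
    also have "\<dots> = g \<otimes> (a \<otimes> b)"
      using ac bc g by (simp add: m_assoc ag)
    finally show ?thesis .
  qed
  then show "a \<otimes> b \<in> group_center G"
    using ac bc by (simp add: group_center_def)
qed (auto simp: group_center_def)

lemma irreducible_rep_center_scalar:
  assumes irr: "irreducible_rep G n \<rho>" and z: "z \<in> group_center G"
  shows "\<rho> z = \<rho> z $$ (0,0) \<cdot>\<^sub>m 1\<^sub>m n"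
proof -
  note rep = irreducible_rep_is_rep[OF irr] and n = irreducible_rep_degree_pos[OF irr]
  have zc: "z \<in> carrier G"
    using z by (simp add: group_center_def)
  have "\<rho> z * \<rho> g = \<rho> g * \<rho> z" if "g \<in> carrier G" for g
    using z that by (simp add: group_center_def flip: is_rep_mult[OF rep])
  then obtain c where c: "\<rho> z = c \<cdot>\<^sub>m 1\<^sub>m n"
    using schur_lemma[OF irr is_rep_carrier[OF rep zc]] by blast
  then show ?thesis
    using n by simp
qed

lemma irreducible_rep_center_entry_mult:
  assumes irr: "irreducible_rep G n \<rho>" and z: "z \<in> group_center G" and w: "w \<in> group_center G"
  shows "\<rho> (z \<otimes> w) $$ (0,0) = \<rho> z $$ (0,0) * \<rho> w $$ (0,0)"
proof -
  note rep = irreducible_rep_is_rep[OF irr] and n = irreducible_rep_degree_pos[OF irr]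
  define c d where "c = \<rho> z $$ (0,0)" and "d = \<rho> w $$ (0,0)"
  have "\<rho> (z \<otimes> w) = \<rho> z * \<rho> w"
    using z w subgroup.subset[OF group_center_subgroup] by (blast intro: is_rep_mult[OF rep])
  also have "\<dots> = c \<cdot>\<^sub>m 1\<^sub>m n * (d \<cdot>\<^sub>m 1\<^sub>m n)"
    using irreducible_rep_center_scalar[OF irr] z w unfolding c_def d_def by metis
  also have "\<dots> = c \<cdot>\<^sub>m (1\<^sub>m n * (d \<cdot>\<^sub>m 1\<^sub>m n))"
    by (rule mult_smult_assoc_mat[of _ n n _ n]) simp_all
  finally show ?thesis
    using n by (simp add: c_def d_def)
qed

lemma rep_trace_center_mult_inv:
  assumes irr: "irreducible_rep G n \<rho>" and z: "z \<in> group_center G"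
  shows "mat_trace (\<rho> z) * mat_trace (\<rho> (inv z)) = of_nat n ^ 2"
proof -
  note rep = irreducible_rep_is_rep[OF irr] and n = irreducible_rep_degree_pos[OF irr]
  have zc: "z \<in> carrier G" and z': "inv z \<in> group_center G"
    using z subgroup.m_inv_closed[OF group_center_subgroup] by (auto simp: group_center_def)
  have "\<rho> z $$ (0,0) * \<rho> (inv z) $$ (0,0) = \<rho> (z \<otimes> inv z) $$ (0,0)"
    by (rule irreducible_rep_center_entry_mult[OF irr z z', symmetric])
  also have "\<dots> = 1"
    using zc n by (simp add: is_rep_one[OF rep])
  finally have "\<rho> z $$ (0,0) * \<rho> (inv z) $$ (0,0) = 1" .
  then show ?thesis
    by (subst (1 2) irreducible_rep_center_scalar[OF irr])
      (use z z' in \<open>simp_all add: power2_eq_square algebra_simps\<close>)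
qed

lemma rep_character_one: "is_rep G n \<rho> \<Longrightarrow> rep_character G \<rho> \<one> = of_nat n"
  by (simp add: rep_character_def is_rep_one)

lemma exists_central_character:
  assumes irr: "irreducible_rep G n \<rho>"
  shows "\<exists>\<mu> \<in> Irr (G\<lparr>carrier := group_center G\<rparr>).
           \<forall>z \<in> group_center G. rep_character G \<rho> z = rep_character G \<rho> \<one> * \<mu> z"
proof -
  let ?Z = "group_center G"
  let ?H = "G\<lparr>carrier := ?Z\<rparr>"
  note rep = irreducible_rep_is_rep[OF irr] and n = irreducible_rep_degree_pos[OF irr]
  have Z: "subgroup ?Z G"
    by (rule group_center_subgroup)
  note scalar = irreducible_rep_center_scalar[OF irr]
  define \<sigma> where "\<sigma> z = mat 1 1 (\<lambda>_. \<rho> z $$ (0,0))" for z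
  have "is_rep ?H 1 \<sigma>"
    unfolding is_rep_def
  proof (intro conjI ballI)
    show "\<sigma> \<one>\<^bsub>?H\<^esub> = 1\<^sub>m 1"
      using n by (intro eq_matI) (simp_all add: \<sigma>_def is_rep_one[OF rep])
  next
    fix z w assume "z \<in> carrier ?H" "w \<in> carrier ?H"
    then show "\<sigma> (z \<otimes>\<^bsub>?H\<^esub> w) = \<sigma> z * \<sigma> w"
      using irreducible_rep_center_entry_mult[OF irr] by (intro eq_matI) (simp_all add: \<sigma>_def scalar_prod_def)
  qed (simp add: \<sigma>_def)
  then have "rep_character ?H \<sigma> \<in> Irr ?H"
    by (rule rep_character_in_Irr[OF is_rep_one_dim_irreducible])
  moreover have "rep_character G \<rho> z = rep_character G \<rho> \<one> * rep_character ?H \<sigma> z" if z: "z \<in> ?Z" for z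
  proof -
    have "mat_trace (\<rho> z) = of_nat n * \<rho> z $$ (0,0)"
      using scalar[OF z] by (metis mat_trace_smult_one)
    then show ?thesis
      using z subgroup.subset[OF Z] rep_character_one[OF rep]
      by (auto simp: rep_character_def \<sigma>_def mat_trace_def)
  qed
  ultimately show ?thesis
    by blast
qed

lemma card_eq_center_degree_plus_noncentral:
  assumes fin: "finite (carrier G)" and irr: "irreducible_rep G n \<rho>"
  shows "real (card (carrier G))
           = real (card (group_center G) * n ^ 2)
             + (\<Sum>g\<in>carrier G - group_center G. (cmod (mat_trace (\<rho> g)))\<^sup>2)"
proof -
  let ?Z = "group_center G"
  let ?f = "\<lambda>g. mat_trace (\<rho> g) * mat_trace (\<rho> (inv g))"
  note rep = irreducible_rep_is_rep[OF irr]
  have Z: "?Z \<subseteq> carrier G"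
    by (simp add: group_center_def)
  have "of_nat (card (carrier G)) = (\<Sum>g\<in>carrier G. ?f g)"
    by (rule character_orthogonality[OF fin irr, symmetric])
  also have "\<dots> = (\<Sum>g\<in>?Z. ?f g) + (\<Sum>g\<in>carrier G - ?Z. ?f g)"
    using sum.subset_diff[OF Z fin] by (simp add: add.commute)
  also have "(\<Sum>g\<in>?Z. ?f g) = of_nat (card ?Z * n ^ 2)"
    by (simp add: rep_trace_center_mult_inv[OF irr])
  also have "(\<Sum>g\<in>carrier G - ?Z. ?f g) = (\<Sum>g\<in>carrier G - ?Z. of_real ((cmod (mat_trace (\<rho> g)))\<^sup>2))"
    by (intro sum.cong refl) (simp add: rep_trace_inv[OF fin rep] flip: complex_norm_square)
  also have "\<dots> = of_real (\<Sum>g\<in>carrier G - ?Z. (cmod (mat_trace (\<rho> g)))\<^sup>2)"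
    by simp
  finally show ?thesis
    by (metis Re_complex_of_real of_real_add of_real_of_nat_eq)
qed

lemma fully_ramified_iff_vanishing:
  assumes fin: "finite (carrier G)" and irr: "irreducible_rep G n \<rho>"
  shows "fully_ramified G (rep_character G \<rho>)
           \<longleftrightarrow> (\<forall>g\<in>carrier G - group_center G. mat_trace (\<rho> g) = 0)"
proof -
  let ?Z = "group_center G"
  note rep = irreducible_rep_is_rep[OF irr]
  have Z: "?Z \<subseteq> carrier G" "\<one> \<in> ?Z"
    using subgroup.subset[OF group_center_subgroup] subgroup.one_closed[OF group_center_subgroup] .
  then have "card ?Z > 0"
    using fin by (auto simp: card_gt_0_iff intro: finite_subset)
  moreover have "card ?Z dvd card (carrier G)"
    using lagrange[OF group_center_subgroup] unfolding Coset.order_def by (metis dvd_triv_right)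
  ultimately have "n ^ 2 = card (carrier G) div card ?Z \<longleftrightarrow> card (carrier G) = card ?Z * n ^ 2"
    by auto
  then have "fully_ramified G (rep_character G \<rho>) \<longleftrightarrow> card (carrier G) = card ?Z * n ^ 2"
    using exists_central_character[OF irr] rep_character_one[OF rep]
    by (simp add: fully_ramified_def flip: of_nat_power)
  also have "\<dots> \<longleftrightarrow> real (card (carrier G)) = real (card ?Z * n ^ 2)"
    by (simp only: of_nat_eq_iff)
  also have "\<dots> \<longleftrightarrow> (\<Sum>g\<in>carrier G - ?Z. (cmod (mat_trace (\<rho> g)))\<^sup>2) = 0"
    by (simp only: card_eq_center_degree_plus_noncentral[OF fin irr]) simp
  also have "\<dots> \<longleftrightarrow> (\<forall>g\<in>carrier G - ?Z. mat_trace (\<rho> g) = 0)"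
    using fin by (simp add: sum_nonneg_eq_0_iff)
  finally show ?thesis .
qed

lemma fully_ramified_Irr_iff:
  assumes "finite (carrier G)" "\<chi> \<in> Irr G"
  shows "fully_ramified G \<chi> \<longleftrightarrow> (\<forall>g\<in>carrier G. \<chi> g \<noteq> 0 \<longrightarrow> g \<in> group_center G)"
proof -
  obtain n \<rho> where "irreducible_rep G n \<rho>" "\<chi> = rep_character G \<rho>"
    using assms(2) by (rule IrrE)
  then show ?thesis
    using fully_ramified_iff_vanishing[OF assms(1)] by (auto simp: rep_character_def)
qed

section \<open>The subgroups \<open>V(G|H)\<close> and \<open>U(G|N)\<close>\<close>

lemma normal_Int_Inter:
  assumes "\<forall>K\<in>A. K \<lhd> G"
  shows "carrier G \<inter> \<Inter>A \<lhd> G"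
proof -
  have "subgroup (\<Inter>(insert (carrier G) A)) G"
    using assms by (intro subgroups_Inter) (auto intro: subgroup_self normal_imp_subgroup)
  moreover have "x \<otimes> h \<otimes> inv x \<in> K" if "x \<in> carrier G" "h \<in> carrier G \<inter> \<Inter>A" "K \<in> A" for x h K
    using that assms by (auto simp: normal_inv_iff)
  ultimately show ?thesis
    by (auto simp: normal_inv_iff)
qed

lemma V_sub_subset_iff:
  assumes "subgroup N G"
  shows "V_sub G H \<subseteq> N \<longleftrightarrow> (\<forall>\<chi>\<in>Irr_over G H. \<forall>g\<in>carrier G. \<chi> g \<noteq> 0 \<longrightarrow> g \<in> N)"
proof
  assume V: "V_sub G H \<subseteq> N"
  show "\<forall>\<chi>\<in>Irr_over G H. \<forall>g\<in>carrier G. \<chi> g \<noteq> 0 \<longrightarrow> g \<in> N"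
  proof (intro ballI impI)
    fix \<chi> g assume "\<chi> \<in> Irr_over G H" "g \<in> carrier G" "\<chi> g \<noteq> 0"
    then have "g \<in> V_sub G H"
      unfolding V_sub_def by (intro generate.incl) blast
    with V show "g \<in> N" ..
  qed
next
  assume "\<forall>\<chi>\<in>Irr_over G H. \<forall>g\<in>carrier G. \<chi> g \<noteq> 0 \<longrightarrow> g \<in> N"
  then show "V_sub G H \<subseteq> N"
    unfolding V_sub_def by (intro generate_subgroup_incl[OF _ assms]) blast
qed

lemma V_sub_mono:
  "Irr_over G K \<subseteq> Irr_over G H \<Longrightarrow> V_sub G K \<subseteq> V_sub G H"
  unfolding V_sub_def by (intro mono_generate) blast

lemma Irr_over_U_subE:
  assumes fin: "finite (carrier G)" and \<chi>: "\<chi> \<in> Irr_over G (U_sub G N)"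
  obtains H where "H \<lhd> G" "V_sub G H \<subseteq> N" "\<chi> \<in> Irr_over G H"
proof -
  have Irr: "\<chi> \<in> Irr G" and "\<not> U_sub G N \<subseteq> char_kernel G \<chi>"
    using \<chi> by (auto simp: Irr_over_def)
  moreover have "subgroup (char_kernel G \<chi>) G"
    using char_kernel_normal[OF fin Irr] by (rule normal_imp_subgroup)
  ultimately have "\<not> \<Union>{H. H \<lhd> G \<and> V_sub G H \<subseteq> N} \<subseteq> char_kernel G \<chi>"
    unfolding U_sub_def using generate_subgroup_incl by blast
  then show ?thesis
    using that Irr by (auto simp: Irr_over_def)
qed

lemma V_sub_U_sub_subset:
  assumes fin: "finite (carrier G)" and N: "subgroup N G"
  shows "V_sub G (U_sub G N) \<subseteq> N"
  unfolding V_sub_subset_iff[OF N]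
proof (intro ballI impI)
  fix \<chi> g assume \<chi>: "\<chi> \<in> Irr_over G (U_sub G N)" and g: "g \<in> carrier G" "\<chi> g \<noteq> 0"
  obtain H where "V_sub G H \<subseteq> N" "\<chi> \<in> Irr_over G H"
    using Irr_over_U_subE[OF fin \<chi>] by blast
  moreover have "g \<in> V_sub G H"
    unfolding V_sub_def using g \<open>\<chi> \<in> Irr_over G H\<close> by (blast intro: generate.incl)
  ultimately show "g \<in> N"
    by blast
qed

lemma subgroup_subset_U_sub:
  assumes fin: "finite (carrier G)" and H: "subgroup H G" and VH: "V_sub G H \<subseteq> N"
  shows "H \<subseteq> U_sub G N"
proof -
  define K where "K = carrier G \<inter> \<Inter>{char_kernel G \<chi> | \<chi>. \<chi> \<in> Irr G \<and> H \<subseteq> char_kernel G \<chi>}"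
  have "K \<lhd> G"
    unfolding K_def by (rule normal_Int_Inter) (auto intro: char_kernel_normal[OF fin])
  moreover have "Irr_over G K \<subseteq> Irr_over G H"
    by (auto simp: Irr_over_def K_def)
  then have "V_sub G K \<subseteq> N"
    using V_sub_mono VH by blast
  ultimately have "K \<subseteq> U_sub G N"
    unfolding U_sub_def by (blast intro: generate.incl)
  moreover have "H \<subseteq> K"
    using subgroup.subset[OF H] by (auto simp: K_def)
  ultimately show ?thesis
    by blast
qed

lemma Irr_over_fully_ramified_iff:
  assumes "finite (carrier G)"
  shows "(\<forall>\<chi>\<in>Irr_over G H. fully_ramified G \<chi>) \<longleftrightarrow> V_sub G H \<subseteq> group_center G"
  using fully_ramified_Irr_iff[OF assms] V_sub_subset_iff[OF group_center_subgroup]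
  by (auto simp: Irr_over_def)

end

theorem theoremH:
  fixes G :: "('a, 'b) monoid_scheme"
  assumes "group G" and "finite (carrier G)"
  shows "(\<forall>\<chi> \<in> Irr_over G (U_grp G). fully_ramified G \<chi>) \<and>
         (\<forall>H. subgroup H G \<longrightarrow> (\<forall>\<chi> \<in> Irr_over G H. fully_ramified G \<chi>) \<longrightarrow> H \<subseteq> U_grp G)"
proof -
  interpret group G
    by (rule assms(1))
  note ramified_iff = Irr_over_fully_ramified_iff[OF assms(2)]
  have "V_sub G (U_grp G) \<subseteq> group_center G"
    unfolding U_grp_def by (rule V_sub_U_sub_subset[OF assms(2) group_center_subgroup])
  moreover have "H \<subseteq> U_grp G" if "subgroup H G" "V_sub G H \<subseteq> group_center G" for H
    unfolding U_grp_def by (rule subgroup_subset_U_sub[OF assms(2) that])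
  ultimately show ?thesis
    by (simp add: ramified_iff)
qed

end
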